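(* For every hypergraph with loops $G=(V,E,L)$, the convex set $\mathrm{PP}(G)$ is closed.
   Context: A hypergraph with loops is $G=(V,E,L)$: $V$ a finite node set, $E$ a set of subsets of $V$ of cardinality at least two, $L$ a set of loops $\{i,i\}$, $i\in V$, partitioned as $L=L^-\cup L^+$ (minus/plus loops). $\mathrm{PP}(G):=\mathrm{conv}\{z\in\mathbb{R}^{V\cup E\cup L}: z_{ii}\ge z_i^2\ \forall\{i,i\}\in L^+,\ z_{ii}\le z_i^2\ \forall \{i,i\}\in L^-,\ z_e=\prod_{i\in e}z_i\ \forall e\in E,\ z_i\in[0,1]\ \forall i\in V\}$. *)

theory Defs
  imports "HOL-Analysis.Analysis"
begin

text \<open>Using the finite type ('v + 'v set + 'v), R^(V \<union> E \<union> L) is embedded in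
  real ^ ('v + 'v set + 'v) as the coordinate subspace of vectors vanishing
  outside V \<union> E \<union> L.\<close>
type_synonym 'v hg_index = "'v + 'v set + 'v"

abbreviation NodeIx :: "'v \<Rightarrow> 'v hg_index" where "NodeIx i \<equiv> Inl i"
abbreviation EdgeIx :: "'v set \<Rightarrow> 'v hg_index" where "EdgeIx e \<equiv> Inr (Inl e)"
abbreviation LoopIx :: "'v \<Rightarrow> 'v hg_index" where "LoopIx i \<equiv> Inr (Inr i)"

text \<open>A hypergraph with loops G = (V, E, L), L = L^- \<union> L^+ (a partition);
  the loop {i,i} is identified with node i, so L^- and L^+ are given as node sets.\<close>
definition hypergraph_with_loops :: "'v set \<Rightarrow> 'v set set \<Rightarrow> 'v set \<Rightarrow> 'v set \<Rightarrow> bool" where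
  "hypergraph_with_loops V E Lminus Lplus \<longleftrightarrow>
     finite V \<and> (\<forall>e\<in>E. e \<subseteq> V \<and> card e \<ge> 2) \<and>
     Lminus \<subseteq> V \<and> Lplus \<subseteq> V \<and> Lminus \<inter> Lplus = {}"

definition hg_coords :: "'v set \<Rightarrow> 'v set set \<Rightarrow> 'v set \<Rightarrow> 'v set \<Rightarrow> 'v hg_index set" where
  "hg_coords V E Lminus Lplus = NodeIx ` V \<union> EdgeIx ` E \<union> LoopIx ` (Lminus \<union> Lplus)"

definition PP_points :: "'v set \<Rightarrow> 'v set set \<Rightarrow> 'v set \<Rightarrow> 'v set \<Rightarrow> (real ^ ('v::finite) hg_index) set" where
  "PP_points V E Lminus Lplus =
     {z. (\<forall>k. k \<notin> hg_coords V E Lminus Lplus \<longrightarrow> z $ k = 0) \<and>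
         (\<forall>i\<in>Lplus. z $ LoopIx i \<ge> (z $ NodeIx i)^2) \<and>
         (\<forall>i\<in>Lminus. z $ LoopIx i \<le> (z $ NodeIx i)^2) \<and>
         (\<forall>e\<in>E. z $ EdgeIx e = (\<Prod>i\<in>e. z $ NodeIx i)) \<and>
         (\<forall>i\<in>V. 0 \<le> z $ NodeIx i \<and> z $ NodeIx i \<le> 1)}"

definition PP :: "'v set \<Rightarrow> 'v set set \<Rightarrow> 'v set \<Rightarrow> 'v set \<Rightarrow> (real ^ ('v::finite) hg_index) set" where
  "PP V E Lminus Lplus = convex hull (PP_points V E Lminus Lplus)"

end

theory Submission
  imports Defs
begin

text \<open>Every point of PP_points splits into a point whose loop coordinates are exactly the squares
  z_ii = z_i^2, plus a vector supported on the loops that is nonnegative on L^+ and nonpositive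
  on L^-. The points of the first kind form a compact set K (all coordinates lie in [0,1]), the
  vectors of the second kind a closed convex cone C. Hence PP(G) = conv (K + C) = conv K + C is
  the sum of a compact and a closed set, and therefore closed.\<close>

definition PP_square_points :: "'v set \<Rightarrow> 'v set set \<Rightarrow> 'v set \<Rightarrow> 'v set \<Rightarrow> (real ^ ('v::finite) hg_index) set" where
  "PP_square_points V E Lminus Lplus =
     {z \<in> PP_points V E Lminus Lplus. \<forall>i\<in>Lminus \<union> Lplus. z $ LoopIx i = (z $ NodeIx i)^2}"

definition loop_cone :: "'v set \<Rightarrow> 'v set \<Rightarrow> (real ^ ('v::finite) hg_index) set" where
  "loop_cone Lminus Lplus =
     {c. (\<forall>k. k \<notin> LoopIx ` (Lminus \<union> Lplus) \<longrightarrow> c $ k = 0) \<and>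
         (\<forall>i\<in>Lplus. 0 \<le> c $ LoopIx i) \<and> (\<forall>i\<in>Lminus. c $ LoopIx i \<le> 0)}"

lemma closed_PP_points: "closed (PP_points V E Lminus Lplus)"
  unfolding PP_points_def Ball_def
  by (intro closed_Collect_conj closed_Collect_all closed_Collect_imp open_Collect_const
        closed_Collect_eq closed_Collect_le continuous_intros)

lemma closed_PP_square_points: "closed (PP_square_points V E Lminus Lplus)"
proof -
  have "PP_square_points V E Lminus Lplus =
      PP_points V E Lminus Lplus \<inter> {z. \<forall>i. i \<in> Lminus \<union> Lplus \<longrightarrow> z $ LoopIx i = (z $ NodeIx i)^2}"
    unfolding PP_square_points_def by auto
  also have "closed \<dots>"
    by (intro closed_Int closed_PP_points closed_Collect_all closed_Collect_imp open_Collect_const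
          closed_Collect_eq continuous_intros)
  finally show ?thesis .
qed

lemma PP_points_node_bounds:
  assumes "z \<in> PP_points V E Lminus Lplus"
  shows "0 \<le> z $ NodeIx i" and "z $ NodeIx i \<le> 1"
proof -
  have "0 \<le> z $ NodeIx i \<and> z $ NodeIx i \<le> 1"
  proof (cases "i \<in> V")
    case False
    then have "NodeIx i \<notin> hg_coords V E Lminus Lplus" by (auto simp: hg_coords_def)
    with assms show ?thesis by (simp add: PP_points_def)
  qed (use assms in \<open>simp add: PP_points_def\<close>)
  then show "0 \<le> z $ NodeIx i" and "z $ NodeIx i \<le> 1" by auto
qed

lemma PP_square_points_subset_unit_box: "PP_square_points V E Lminus Lplus \<subseteq> cbox 0 1"
proof
  fix z assume "z \<in> PP_square_points V E Lminus Lplus"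
  then have z: "z \<in> PP_points V E Lminus Lplus"
    and loops: "\<forall>i\<in>Lminus \<union> Lplus. z $ LoopIx i = (z $ NodeIx i)^2"
    by (auto simp: PP_square_points_def)
  note node_bounds = PP_points_node_bounds[OF z]
  have "0 \<le> z $ k \<and> z $ k \<le> 1" for k
  proof (cases "k \<in> hg_coords V E Lminus Lplus")
    case False
    with z show ?thesis by (simp add: PP_points_def)
  next
    case True
    then consider (node) i where "k = NodeIx i" | (edge) e where "e \<in> E" "k = EdgeIx e"
      | (loop) i where "i \<in> Lminus \<union> Lplus" "k = LoopIx i"
      by (auto simp: hg_coords_def)
    then show ?thesis
    proof cases
      case node
      then show ?thesis using node_bounds by simp
    next
      case edge
      with z have "z $ k = (\<Prod>i\<in>e. z $ NodeIx i)" by (simp add: PP_points_def)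
      then show ?thesis using node_bounds by (simp add: prod_nonneg prod_le_1)
    next
      case loop
      then show ?thesis using loops node_bounds by (simp add: power_le_one)
    qed
  qed
  then show "z \<in> cbox 0 1" by (simp add: mem_box_cart)
qed

lemma compact_PP_square_points: "compact (PP_square_points V E Lminus Lplus)"
  unfolding compact_eq_bounded_closed
  by (intro conjI bounded_subset[OF bounded_cbox PP_square_points_subset_unit_box]
        closed_PP_square_points)

lemma closed_loop_cone: "closed (loop_cone Lminus Lplus)"
  unfolding loop_cone_def Ball_def
  by (intro closed_Collect_conj closed_Collect_all closed_Collect_imp open_Collect_const
        closed_Collect_eq closed_Collect_le continuous_intros)

lemma convex_loop_cone: "convex (loop_cone Lminus Lplus)"
  unfolding convex_def loop_cone_def by (auto simp: mult_nonneg_nonpos add_nonpos_nonpos)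

lemma PP_points_eq_square_points_plus_loop_cone:
  fixes V :: "'v::finite set"
  shows "PP_points V E Lminus Lplus = PP_square_points V E Lminus Lplus + loop_cone Lminus Lplus"
    (is "?P = ?K + ?C")
proof
  show "?P \<subseteq> ?K + ?C"
  proof
    fix z assume z: "z \<in> ?P"
    define c :: "real ^ 'v hg_index" where "c = (\<chi> k. case k of
        Inr (Inr i) \<Rightarrow> if i \<in> Lminus \<union> Lplus then z $ LoopIx i - (z $ NodeIx i)^2 else 0
      | _ \<Rightarrow> 0)"
    have c_out: "c $ k = 0" if "k \<notin> LoopIx ` (Lminus \<union> Lplus)" for k
      using that by (auto simp: c_def split: sum.split)
    have c_loop: "c $ LoopIx i = z $ LoopIx i - (z $ NodeIx i)^2" if "i \<in> Lminus \<union> Lplus" for i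
      using that by (simp add: c_def)
    have c_node: "c $ NodeIx i = 0" and c_edge: "c $ EdgeIx e = 0" for i e
      by (simp_all add: c_def)
    have "c \<in> ?C"
      using z c_out c_loop by (auto simp: loop_cone_def PP_points_def)
    moreover have "z - c \<in> ?K"
    proof -
      have "k \<notin> LoopIx ` (Lminus \<union> Lplus)" if "k \<notin> hg_coords V E Lminus Lplus" for k
        using that by (auto simp: hg_coords_def)
      then show ?thesis
        using z c_out c_loop by (auto simp: PP_square_points_def PP_points_def c_node c_edge)
    qed
    ultimately have "(z - c) + c \<in> ?K + ?C" by (intro set_plus_intro)
    then show "z \<in> ?K + ?C" by simp
  qed
next
  show "?K + ?C \<subseteq> ?P"
  proof
    fix w assume "w \<in> ?K + ?C"
    then obtain a c where a: "a \<in> ?K" and c: "c \<in> ?C" and w: "w = a + c"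
      by (auto simp: set_plus_def)
    have c_node: "c $ NodeIx i = 0" and c_edge: "c $ EdgeIx e = 0" for i e
      using c by (auto simp: loop_cone_def)
    have c_out: "c $ k = 0" if "k \<notin> hg_coords V E Lminus Lplus" for k
      using c that by (auto simp: loop_cone_def hg_coords_def)
    show "w \<in> ?P"
      using a c c_out unfolding w
      by (auto simp: PP_square_points_def PP_points_def loop_cone_def c_node c_edge)
  qed
qed

lemma closed_convex_hull_compact_plus_closed_convex:
  fixes K C :: "'a::euclidean_space set"
  assumes "compact K" and "closed C" and "convex C"
  shows "closed (convex hull (K + C))"
proof -
  have "convex hull (K + C) = convex hull K + C"
    using assms(3) by (simp add: convex_hull_set_plus convex_hull_eq[THEN iffD2])
  also have "\<dots> = (\<Union>x\<in>convex hull K. \<Union>y\<in>C. {x + y})"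
    by (auto simp: set_plus_def)
  finally show ?thesis
    using compact_closed_sums[OF compact_convex_hull[OF assms(1)] assms(2)] by simp
qed

theorem lemma1:
  fixes V :: "'v::finite set" and E :: "'v set set" and Lminus Lplus :: "'v set"
  assumes "hypergraph_with_loops V E Lminus Lplus"
  shows "closed (PP V E Lminus Lplus)"
  unfolding PP_def PP_points_eq_square_points_plus_loop_cone
  by (intro closed_convex_hull_compact_plus_closed_convex compact_PP_square_points
        closed_loop_cone convex_loop_cone)

end
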